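(* Let $k\in\mathbb N$, $1\le p\le\infty$, $\alpha,\beta\in J_p$, and $f\in\mathbb M^k\cap\mathbb W_p^{\alpha,\beta}$. Then $\|w_{\alpha,\beta}T_{k-1}(f)\|_p\le c\|w_{\alpha,\beta}f\|_p$, with $c$ independent of $f$, where \[ T_{k-1}(f,x)=f_-^{(k-1)}(0)\frac{x^{k-1}}{(k-1)!}+\sum_{i=0}^{k-2}f^{(i)}(0)\frac{x^i}{i!}. \]
   Context: $w_{\alpha,\beta}(x)=(1+x)^\alpha(1-x)^\beta$; $\|\cdot\|_p$ is the $L_p[-1,1]$ norm; $\mathbb W_p^{\alpha,\beta}=\{f:\|w_{\alpha,\beta}f\|_p<\infty\}$; $J_p=(-1/p,\infty)$ if $p<\infty$, $J_\infty=[0,\infty)$. $\mathbb M^k$ is the set of $f:(-1,1)\to\mathbb R$ whose $k$th divided differences at any $k+1$ distinct points of $(-1,1)$ are nonnegative; for $f\in\mathbb M^k$ the derivatives $f^{(j)}$, $j\le k-2$, exist on $(-1,1)$ and $f^{(k-1)}_-$ denotes the left derivative of $f^{(k-2)}$ (for $k=1$, $f^{(0)}_-(0)$ is the left limit $f(0^-)$). *)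

theory Defs
  imports "HOL-Analysis.Analysis" "HOL-Probability.Essential_Supremum"
begin

definition jw :: "real \<Rightarrow> real \<Rightarrow> real \<Rightarrow> real" where
  "jw a b x = (1 + x) powr a * (1 - x) powr b"

definition Lp_norm :: "ennreal \<Rightarrow> (real \<Rightarrow> real) \<Rightarrow> ennreal" where
  "Lp_norm p g =
     (if p = \<infinity> then esssup lebesgue (\<lambda>x. ennreal \<bar>g x\<bar> * indicator {-1..1} x)
      else (let r = enn2real p;
                I = (\<integral>\<^sup>+ x. ennreal (\<bar>g x\<bar> powr r) * indicator {-1..1} x \<partial>lebesgue)
            in if I = \<infinity> then \<infinity> else ennreal (enn2real I powr (1 / r))))"

definition Jp :: "ennreal \<Rightarrow> real set" where
  "Jp p = (if p = \<infinity> then {0..} else {-(1 / enn2real p)<..})"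

definition divdiff :: "(real \<Rightarrow> real) \<Rightarrow> nat \<Rightarrow> (nat \<Rightarrow> real) \<Rightarrow> real" where
  "divdiff f k x = (\<Sum>j=0..k. f (x j) / (\<Prod>i\<in>{0..k}-{j}. (x j - x i)))"

definition kmono :: "nat \<Rightarrow> (real \<Rightarrow> real) \<Rightarrow> bool" where
  "kmono k f \<longleftrightarrow> (\<forall>x::nat \<Rightarrow> real. (\<forall>i\<le>k. x i \<in> {-1<..<1}) \<and> inj_on x {0..k}
                      \<longrightarrow> divdiff f k x \<ge> 0)"

text \<open>Left derivative of the (k-2)th derivative at 0 (for k = 1: left limit f(0-)).\<close>
definition leftder :: "nat \<Rightarrow> (real \<Rightarrow> real) \<Rightarrow> real" where
  "leftder k f = (if k = 1 then Lim (at_left 0) f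
     else Lim (at_left 0) (\<lambda>h. ((deriv ^^ (k - 2)) f h - (deriv ^^ (k - 2)) f 0) / h))"

definition Taylor :: "nat \<Rightarrow> (real \<Rightarrow> real) \<Rightarrow> real \<Rightarrow> real" where
  "Taylor k f x = leftder k f * x ^ (k - 1) / fact (k - 1)
     + (\<Sum>i<k - 1. (deriv ^^ i) f 0 * x ^ i / fact i)"

end

theory Submission
  imports Defs
begin

text \<open>A finite weighted norm \<open>\<Lambda>\<close> forces \<open>f\<close> to take, on every subinterval \<open>[u, v]\<close> of
  \<open>[-1/2, 1/2]\<close>, a value of size at most \<open>G / (v - u)\<close> with \<open>G\<close> a multiple of \<open>\<Lambda>\<close>, because
  the weight is bounded below there. For \<open>f\<close> in \<open>M^k\<close> the \<open>k\<close>-point divided differences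
  increase with the nodes, so comparing with well separated nodes where \<open>f\<close> is small bounds
  them near \<open>0\<close> by a multiple of \<open>G\<close>; comparing again with such nodes bounds the divided
  differences of every lower order. Divided differences of \<open>f'\<close> are limits of sums of
  divided differences of \<open>f\<close> with one node more, so the bounds and the positivity pass to
  \<open>f^(i)\<close>, \<open>i \<le> k - 2\<close>, near \<open>0\<close>, and the monotone difference quotients of \<open>f^(k-2)\<close> bound
  its left derivative at \<open>0\<close>. So \<open>T_(k-1)(f)\<close> is bounded on \<open>[-1, 1]\<close> by a multiple of
  \<open>\<Lambda>\<close>, and \<open>\<alpha>, \<beta> \<in> J_p\<close> makes the weight itself of finite norm.\<close>

section \<open>Divided differences over sets of nodes\<close>

definition divided_diff :: "(real \<Rightarrow> real) \<Rightarrow> real set \<Rightarrow> real" where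
  "divided_diff g S = (\<Sum>y\<in>S. g y / (\<Prod>z\<in>S - {y}. y - z))"

lemma divided_diff_image:
  assumes "inj_on t I"
  shows "divided_diff g (t ` I) = (\<Sum>m\<in>I. g (t m) / (\<Prod>l\<in>I - {m}. t m - t l))"
proof -
  have "(\<Prod>z\<in>t ` I - {t m}. t m - z) = (\<Prod>l\<in>I - {m}. t m - t l)" if "m \<in> I" for m
  proof -
    have "t ` I - {t m} = t ` (I - {m})" using assms that by (auto simp: inj_on_def)
    moreover have "inj_on t (I - {m})" using assms by (auto simp: inj_on_def)
    ultimately show ?thesis by (simp add: prod.reindex)
  qed
  then show ?thesis
    unfolding divided_diff_def by (simp add: sum.reindex[OF assms])
qed

lemma divdiff_eq_divided_diff:
  assumes "inj_on x {0..k}"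
  shows "divdiff f k x = divided_diff f (x ` {0..k})"
  unfolding divdiff_def divided_diff_image[OF assms] by simp

lemma divided_diff_singleton [simp]: "divided_diff g {x} = g x"
  by (simp add: divided_diff_def)

lemma prod_insert_diff:
  assumes "finite A" "a \<in> A" "v \<notin> A"
  shows "(\<Prod>z\<in>insert v A - {a}. a - z) = (a - v) * (\<Prod>z\<in>A - {a}. a - z)"
proof -
  have "insert v A - {a} = insert v (A - {a})" using assms by auto
  then show ?thesis using assms by simp
qed

lemma divided_diff_insert:
  assumes "finite A" "u \<notin> A"
  shows "divided_diff g (insert u A)
           = (\<Sum>a\<in>A. g a / ((a - u) * (\<Prod>z\<in>A - {a}. a - z))) + g u / (\<Prod>z\<in>A. u - z)"
proof -
  have "insert u A - {u} = A" using assms by auto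
  moreover have "(\<Sum>y\<in>A. g y / (\<Prod>z\<in>insert u A - {y}. y - z))
                   = (\<Sum>a\<in>A. g a / ((a - u) * (\<Prod>z\<in>A - {a}. a - z)))"
    by (rule sum.cong) (use assms prod_insert_diff in auto)
  ultimately show ?thesis
    using assms unfolding divided_diff_def by (simp add: sum.insert)
qed

lemma divided_diff_pair:
  assumes "x \<noteq> y"
  shows "divided_diff g {y, x} = (g y - g x) / (y - x)"
proof -
  have "divided_diff g {y, x} = g x / (x - y) + g y / (y - x)"
    using divided_diff_insert[of "{x}" y g] assms by simp
  also have "\<dots> = (g y - g x) / (y - x)"
  proof -
    have "x - y = -(y - x)" by simp
    then show ?thesis by (simp only: divide_minus_right diff_divide_distrib)
  qed
  finally show ?thesis .
qed

lemma divided_diff_recurrence: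
  assumes "finite A" "u \<notin> A" "v \<notin> A" "u \<noteq> v"
  shows "divided_diff g (insert u A) - divided_diff g (insert v A)
           = (u - v) * divided_diff g (insert u (insert v A))"
proof -
  define P where "P a = (\<Prod>z\<in>A - {a}. a - z)" for a
  have P0: "P a \<noteq> 0" if "a \<in> A" for a
    unfolding P_def using assms that by (simp add: prod_zero_iff)
  have Pu: "(\<Prod>z\<in>A. u - z) \<noteq> 0" "(\<Prod>z\<in>A. v - z) \<noteq> 0"
    using assms by (auto simp: prod_zero_iff)
  have uvA: "divided_diff g (insert u (insert v A))
      = (\<Sum>a\<in>A. g a / ((a - u) * ((a - v) * P a)))
        + g v / ((v - u) * (\<Prod>z\<in>A. v - z)) + g u / ((u - v) * (\<Prod>z\<in>A. u - z))"
  proof -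
    have "insert v A - {v} = A" using assms by auto
    moreover have "(\<Sum>a\<in>A. g a / ((a - u) * (\<Prod>z\<in>insert v A - {a}. a - z)))
                     = (\<Sum>a\<in>A. g a / ((a - u) * ((a - v) * P a)))"
      by (rule sum.cong) (use assms prod_insert_diff in \<open>auto simp: P_def\<close>)
    ultimately show ?thesis
      using assms divided_diff_insert[of "insert v A" u g] by (simp add: sum.insert)
  qed
  have uA: "divided_diff g (insert u A) = (\<Sum>a\<in>A. g a / ((a - u) * P a)) + g u / (\<Prod>z\<in>A. u - z)"
    and vA: "divided_diff g (insert v A) = (\<Sum>a\<in>A. g a / ((a - v) * P a)) + g v / (\<Prod>z\<in>A. v - z)"
    using divided_diff_insert[OF assms(1,2)] divided_diff_insert[OF assms(1,3)] by (simp_all add: P_def)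
  have sums: "(\<Sum>a\<in>A. g a / ((a - u) * P a)) - (\<Sum>a\<in>A. g a / ((a - v) * P a))
                = (u - v) * (\<Sum>a\<in>A. g a / ((a - u) * ((a - v) * P a)))"
    unfolding sum_subtractf[symmetric] sum_distrib_left
  proof (rule sum.cong)
    fix a assume "a \<in> A"
    then have "a - u \<noteq> 0" "a - v \<noteq> 0" "P a \<noteq> 0" using assms P0 by auto
    then show "g a / ((a - u) * P a) - g a / ((a - v) * P a)
                 = (u - v) * (g a / ((a - u) * ((a - v) * P a)))"
      by (simp add: divide_simps) (simp add: algebra_simps)
  qed simp
  have "u - v \<noteq> 0" using assms by simp
  then have "(u - v) * (g u / ((u - v) * (\<Prod>z\<in>A. u - z))) = g u / (\<Prod>z\<in>A. u - z)"
    and "(u - v) * (g v / ((v - u) * (\<Prod>z\<in>A. v - z))) = - (g v / (\<Prod>z\<in>A. v - z))"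
    using Pu by (simp_all add: field_simps)
  then show ?thesis
    unfolding uvA uA vA distrib_left using sums by linarith
qed

lemma divided_diff_insert_mono:
  assumes "finite A" "h1 \<notin> A" "h2 \<notin> A" "h1 \<le> h2"
    and "h1 \<noteq> h2 \<Longrightarrow> divided_diff g (insert h2 (insert h1 A)) \<ge> 0"
  shows "divided_diff g (insert h1 A) \<le> divided_diff g (insert h2 A)"
proof (cases "h1 = h2")
  case False
  then have "divided_diff g (insert h2 A) - divided_diff g (insert h1 A)
               = (h2 - h1) * divided_diff g (insert h2 (insert h1 A))"
    using divided_diff_recurrence assms(1-3) by blast
  with assms(4,5) False show ?thesis by (smt (verit) mult_nonneg_nonneg)
qed simp

definition node_sets :: "real set \<Rightarrow> nat \<Rightarrow> real set set" where
  "node_sets X n = {U. U \<subseteq> X \<and> finite U \<and> card U = n}"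

lemma mem_node_sets [simp]: "U \<in> node_sets X n \<longleftrightarrow> U \<subseteq> X \<and> finite U \<and> card U = n"
  by (simp add: node_sets_def)

lemma node_sets_mono: "X \<subseteq> Y \<Longrightarrow> node_sets X n \<subseteq> node_sets Y n"
  unfolding node_sets_def by auto

text \<open>Replace the nodes of \<open>S\<close> by their images under \<open>\<phi>\<close> one at a time, using the recurrence
  at each step.\<close>

lemma divided_diff_telescope:
  assumes "finite S" "finite A" "inj_on \<phi> S" "\<phi> ` S \<inter> S = {}" "A \<inter> S = {}" "A \<inter> \<phi> ` S = {}"
  shows "\<exists>U. (\<forall>s\<in>S. U s \<in> node_sets (A \<union> S \<union> \<phi> ` S) (card A + card S + 1))
            \<and> divided_diff g (A \<union> S) - divided_diff g (A \<union> \<phi> ` S)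
                = (\<Sum>s\<in>S. (s - \<phi> s) * divided_diff g (U s))"
  using assms
proof (induction S arbitrary: A rule: finite_induct)
  case empty
  then show ?case by auto
next
  case (insert s S')
  define A' where "A' = insert (\<phi> s) A"
  have \<phi>s: "\<phi> s \<notin> insert s S'" "\<phi> s \<notin> \<phi> ` S'"
    using insert.prems insert.hyps by (auto simp: inj_on_def)
  obtain U' where U': "\<forall>t\<in>S'. U' t \<in> node_sets (A' \<union> S' \<union> \<phi> ` S') (card A' + card S' + 1)"
    and eq': "divided_diff g (A' \<union> S') - divided_diff g (A' \<union> \<phi> ` S')
                = (\<Sum>t\<in>S'. (t - \<phi> t) * divided_diff g (U' t))"
    using insert.IH[of A'] insert.prems insert.hyps \<phi>s by (auto simp: A'_def inj_on_insert)
  define B where "B = A \<union> S'"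
  have B: "finite B" "s \<notin> B" "\<phi> s \<notin> B" "s \<noteq> \<phi> s"
    using insert \<phi>s by (auto simp: B_def)
  define U where "U = U'(s := insert s (insert (\<phi> s) B))"
  have "divided_diff g (A \<union> insert s S') - divided_diff g (A \<union> \<phi> ` insert s S')
     = (divided_diff g (insert s B) - divided_diff g (insert (\<phi> s) B))
       + (divided_diff g (A' \<union> S') - divided_diff g (A' \<union> \<phi> ` S'))"
    by (simp add: A'_def B_def Un_insert_right insert_commute)
  also have "\<dots> = (\<Sum>t\<in>insert s S'. (t - \<phi> t) * divided_diff g (U t))"
    unfolding divided_diff_recurrence[OF B] eq' U_def
    using insert.hyps by (auto intro!: sum.cong)
  finally have eq: "divided_diff g (A \<union> insert s S') - divided_diff g (A \<union> \<phi> ` insert s S')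
                      = (\<Sum>t\<in>insert s S'. (t - \<phi> t) * divided_diff g (U t))" .
  have "card A' = card A + 1" using insert.prems \<phi>s by (auto simp: A'_def)
  moreover have "card (insert s (insert (\<phi> s) B)) = card A + card (insert s S') + 1"
    using B insert.prems insert.hyps by (simp add: B_def card_Un_disjoint)
  ultimately have "\<forall>t\<in>insert s S'. U t \<in> node_sets (A \<union> insert s S' \<union> \<phi> ` insert s S') (card A + card (insert s S') + 1)"
    using U' B insert.hyps by (auto simp: U_def A'_def B_def)
  with eq show ?case by blast
qed

lemma divided_diff_difference:
  assumes "finite S" "finite T" "card S = card T" "S \<inter> T = {}"
  obtains \<phi> U where "bij_betw \<phi> S T" "\<forall>s\<in>S. U s \<in> node_sets (S \<union> T) (card S + 1)"
    "divided_diff g S - divided_diff g T = (\<Sum>s\<in>S. (s - \<phi> s) * divided_diff g (U s))"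
proof -
  obtain \<phi> where \<phi>: "bij_betw \<phi> S T" using finite_same_card_bij assms by blast
  then have inj: "inj_on \<phi> S" and T: "\<phi> ` S = T" by (auto simp: bij_betw_def)
  with assms have disj: "\<phi> ` S \<inter> S = {}" by auto
  have "\<exists>U. (\<forall>s\<in>S. U s \<in> node_sets (S \<union> T) (card S + 1))
           \<and> divided_diff g S - divided_diff g T = (\<Sum>s\<in>S. (s - \<phi> s) * divided_diff g (U s))"
    using divided_diff_telescope[of S "{}" \<phi> g, OF assms(1) finite.emptyI inj disj] T by simp
  with that[OF \<phi>] show ?thesis by blast
qed

lemma divided_diff_mono_nodes:
  assumes "finite S" "finite T" "card S = card T" "\<forall>s\<in>S. \<forall>t\<in>T. s < t"
    and "\<forall>U\<in>node_sets (S \<union> T) (card S + 1). divided_diff g U \<ge> 0"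
  shows "divided_diff g S \<le> divided_diff g T"
proof -
  have "S \<inter> T = {}" using assms(4) by fastforce
  then obtain \<phi> U where \<phi>: "bij_betw \<phi> S T" and U: "\<forall>s\<in>S. U s \<in> node_sets (S \<union> T) (card S + 1)"
    and eq: "divided_diff g S - divided_diff g T = (\<Sum>s\<in>S. (s - \<phi> s) * divided_diff g (U s))"
    using divided_diff_difference[OF assms(1-3)] by blast
  have "(s - \<phi> s) * divided_diff g (U s) \<le> 0" if "s \<in> S" for s
  proof -
    have "\<phi> s \<in> T" using \<phi> that by (auto simp: bij_betw_def)
    then show ?thesis
      using assms(4,5) U that by (intro mult_nonpos_nonneg) force+
  qed
  then have "(\<Sum>s\<in>S. (s - \<phi> s) * divided_diff g (U s)) \<le> 0" by (rule sum_nonpos)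
  then show ?thesis using eq by simp
qed

lemma divided_diff_close_nodes:
  assumes "finite S" "finite T" "card S = card T" "S \<inter> T = {}"
    and "\<forall>U\<in>node_sets (S \<union> T) (card S + 1). \<bar>divided_diff g U\<bar> \<le> M"
    and "\<forall>s\<in>S. \<forall>t\<in>T. \<bar>s - t\<bar> \<le> d"
  shows "\<bar>divided_diff g S - divided_diff g T\<bar> \<le> real (card S) * d * M"
proof -
  obtain \<phi> U where \<phi>: "bij_betw \<phi> S T" and U: "\<forall>s\<in>S. U s \<in> node_sets (S \<union> T) (card S + 1)"
    and eq: "divided_diff g S - divided_diff g T = (\<Sum>s\<in>S. (s - \<phi> s) * divided_diff g (U s))"
    using divided_diff_difference[OF assms(1-4)] by blast
  have "\<bar>(s - \<phi> s) * divided_diff g (U s)\<bar> \<le> d * M" if "s \<in> S" for s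
  proof -
    have "\<phi> s \<in> T" using \<phi> that by (auto simp: bij_betw_def)
    then show ?thesis
      unfolding abs_mult using assms(5,6) U that by (intro mult_mono') auto
  qed
  then have "(\<Sum>s\<in>S. \<bar>(s - \<phi> s) * divided_diff g (U s)\<bar>) \<le> (\<Sum>s\<in>S. d * M)"
    by (rule sum_mono)
  then have "\<bar>divided_diff g S - divided_diff g T\<bar> \<le> (\<Sum>s\<in>S. d * M)"
    unfolding eq by (rule order_trans[OF sum_abs])
  then show ?thesis by (simp add: mult.assoc)
qed

definition dd_bounded :: "(real \<Rightarrow> real) \<Rightarrow> nat \<Rightarrow> real \<Rightarrow> real \<Rightarrow> bool" where
  "dd_bounded g n R M \<longleftrightarrow> (\<forall>U\<in>node_sets {-R..R} n. \<bar>divided_diff g U\<bar> \<le> M)"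

definition dd_nonneg :: "(real \<Rightarrow> real) \<Rightarrow> nat \<Rightarrow> real set \<Rightarrow> bool" where
  "dd_nonneg g n X \<longleftrightarrow> (\<forall>U\<in>node_sets X n. divided_diff g U \<ge> 0)"

lemma kmono_imp_dd_nonneg:
  assumes "kmono k f"
  shows "dd_nonneg f (Suc k) {-1<..<1}"
  unfolding dd_nonneg_def
proof
  fix U assume U: "U \<in> node_sets {-1<..<1} (Suc k)"
  then obtain x where x: "bij_betw x {0..k} U"
    using finite_same_card_bij[of "{0..k}" U] by auto
  then have "inj_on x {0..k}" "x ` {0..k} = U" by (auto simp: bij_betw_def)
  moreover have "\<forall>i\<le>k. x i \<in> {-1<..<1}" using U calculation(2) by (auto simp: image_subset_iff)
  ultimately show "divided_diff f U \<ge> 0"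
    using assms divdiff_eq_divided_diff unfolding kmono_def by metis
qed

subsection \<open>Passing to derivatives\<close>

lemma divided_diff_translate_quotient_tendsto:
  assumes "finite S" "\<forall>s\<in>S. (g has_real_derivative g' s) (at s)"
  shows "((\<lambda>h. (divided_diff g ((+) h ` S) - divided_diff g S) / h) \<longlongrightarrow> divided_diff g' S) (at 0)"
proof -
  have "(divided_diff g ((+) h ` S) - divided_diff g S) / h
          = (\<Sum>s\<in>S. ((g (s + h) - g s) / h) / (\<Prod>z\<in>S - {s}. s - z))" for h
  proof -
    have "divided_diff g ((+) h ` S) = (\<Sum>s\<in>S. g (h + s) / (\<Prod>z\<in>S - {s}. s - z))"
      by (simp add: divided_diff_image)
    then show ?thesis
      unfolding divided_diff_def
      by (simp add: sum_divide_distrib sum_subtractf[symmetric] diff_divide_distrib add.commute mult.commute)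
  qed
  moreover have "((\<lambda>h. \<Sum>s\<in>S. ((g (s + h) - g s) / h) / (\<Prod>z\<in>S - {s}. s - z)) \<longlongrightarrow> divided_diff g' S) (at 0)"
    unfolding divided_diff_def by (intro tendsto_intros) (use assms DERIV_D in auto)
  ultimately show ?thesis by simp
qed

lemma eventually_translate_quotient_eq_sum:
  assumes "finite S"
  shows "\<forall>\<^sub>F h in at_right 0. \<exists>U. (\<forall>s\<in>S. U s \<in> node_sets (S \<union> (+) h ` S) (card S + 1))
           \<and> (divided_diff g ((+) h ` S) - divided_diff g S) / h = (\<Sum>s\<in>S. divided_diff g (U s))"
proof -
  have "\<forall>\<^sub>F h in at_right 0. h \<noteq> s' - s" for s s' :: real
  proof (cases "s' - s > 0")
    case True
    then show ?thesis
      by (subst eventually_at_right[of 0 "s' - s"]) (auto intro!: exI[of _ "s' - s"])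
  next
    case False
    have "\<forall>\<^sub>F h in at_right 0. h > (0::real)" by (simp add: eventually_at_right_less)
    then show ?thesis by eventually_elim (use False in auto)
  qed
  then have "\<forall>\<^sub>F h in at_right 0. h > 0 \<and> (\<forall>s\<in>S. \<forall>s'\<in>S. h \<noteq> s' - s)"
    using assms eventually_at_right_less by (auto intro!: eventually_conj eventually_ball_finite)
  then show ?thesis
  proof eventually_elim
    case (elim h)
    then have "(+) h ` S \<inter> S = {}" by force
    then obtain U where U: "\<forall>s\<in>S. U s \<in> node_sets (S \<union> (+) h ` S) (card S + 1)"
      and eq: "divided_diff g S - divided_diff g ((+) h ` S) = (\<Sum>s\<in>S. (s - (h + s)) * divided_diff g (U s))"
      using divided_diff_telescope[of S "{}" "(+) h" g, OF assms finite.emptyI inj_on_add] by auto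
    have "divided_diff g S - divided_diff g ((+) h ` S) = - (h * (\<Sum>s\<in>S. divided_diff g (U s)))"
      using eq by (simp add: sum_distrib_left sum_negf)
    then have "divided_diff g ((+) h ` S) - divided_diff g S = h * (\<Sum>s\<in>S. divided_diff g (U s))"
      by linarith
    with U elim show ?case by auto
  qed
qed

text \<open>Divided differences of \<open>g'\<close> are limits of the translated difference quotients, which
  are sums of divided differences of \<open>g\<close> with one node more.\<close>

lemma divided_diff_deriv_closed_property:
  assumes "finite S" "S \<subseteq> {-R'..R'}" "R' < R"
    and "\<forall>x\<in>{-R<..<R}. g differentiable (at x)"
    and "\<forall>U\<in>node_sets {-R..R} (card S + 1). P (divided_diff g U)"
    and "\<And>u. \<forall>s\<in>S. P (u s) \<Longrightarrow> Q (\<Sum>s\<in>S. u s)" and "closed {x. Q x}"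
  shows "Q (divided_diff (deriv g) S)"
proof -
  have "(g has_real_derivative deriv g s) (at s)" if "s \<in> S" for s
  proof -
    have "s \<in> {-R<..<R}" using assms(2,3) that by force
    then show ?thesis using assms(4) DERIV_deriv_iff_real_differentiable by blast
  qed
  then have lim: "((\<lambda>h. (divided_diff g ((+) h ` S) - divided_diff g S) / h)
                    \<longlongrightarrow> divided_diff (deriv g) S) (at_right 0)"
    by (intro tendsto_mono[OF at_le divided_diff_translate_quotient_tendsto[OF assms(1)]]) auto
  have "\<forall>\<^sub>F h in at_right 0. 0 < h \<and> h < R - R'"
    using assms(3) by (subst eventually_at_right[of 0 "R - R'"]) (auto intro!: exI[of _ "R - R'"])
  with eventually_translate_quotient_eq_sum[OF assms(1), of g]
  have ev: "\<forall>\<^sub>F h in at_right 0. (divided_diff g ((+) h ` S) - divided_diff g S) / h \<in> {x. Q x}"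
  proof eventually_elim
    case (elim h)
    then obtain U where U: "\<forall>s\<in>S. U s \<in> node_sets (S \<union> (+) h ` S) (card S + 1)"
      and eq: "(divided_diff g ((+) h ` S) - divided_diff g S) / h = (\<Sum>s\<in>S. divided_diff g (U s))"
      by blast
    have "S \<union> (+) h ` S \<subseteq> {-R..R}" using assms(2,3) elim(2) by auto
    then have "\<forall>s\<in>S. U s \<in> node_sets {-R..R} (card S + 1)" using U node_sets_mono by blast
    then have "\<forall>s\<in>S. P (divided_diff g (U s))" using assms(5) by blast
    then show ?case unfolding eq by (simp add: assms(6))
  qed
  from Lim_in_closed_set[OF assms(7) ev trivial_limit_at_right_real lim] show ?thesis by simp
qed

lemma dd_bounded_deriv:
  assumes "dd_bounded g (n + 1) R M" "\<forall>x\<in>{-R<..<R}. g differentiable (at x)" "R' < R"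
  shows "dd_bounded (deriv g) n R' (real n * M)"
  unfolding dd_bounded_def
proof
  fix S assume S: "S \<in> node_sets {-R'..R'} n"
  show "\<bar>divided_diff (deriv g) S\<bar> \<le> real n * M"
  proof (rule divided_diff_deriv_closed_property[where P = "\<lambda>x. \<bar>x\<bar> \<le> M"])
    show "\<bar>sum u S\<bar> \<le> real n * M" if "\<forall>s\<in>S. \<bar>u s\<bar> \<le> M" for u
    proof -
      have "\<bar>sum u S\<bar> \<le> (\<Sum>s\<in>S. \<bar>u s\<bar>)" by (rule sum_abs)
      also have "\<dots> \<le> (\<Sum>s\<in>S. M)" using that by (intro sum_mono) auto
      finally show ?thesis using S by simp
    qed
    show "closed {x. \<bar>x\<bar> \<le> real n * M}"
      by (intro closed_Collect_le continuous_intros)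
  qed (use S assms in \<open>auto simp: dd_bounded_def\<close>)
qed

lemma dd_nonneg_deriv:
  assumes "dd_nonneg g (n + 1) {-R..R}" "\<forall>x\<in>{-R<..<R}. g differentiable (at x)" "R' < R"
  shows "dd_nonneg (deriv g) n {-R'..R'}"
  unfolding dd_nonneg_def
proof
  fix S assume S: "S \<in> node_sets {-R'..R'} n"
  show "divided_diff (deriv g) S \<ge> 0"
    by (rule divided_diff_deriv_closed_property[where P = "\<lambda>x. x \<ge> 0"])
       (use S assms in \<open>auto simp: dd_nonneg_def closed_Collect_le intro: sum_nonneg\<close>)
qed

text \<open>A bound on three-point divided differences makes the difference quotients at \<open>x\<close>
  Lipschitz, hence Cauchy as the increment tends to \<open>0\<close>.\<close>

lemma differentiable_if_dd_bounded:
  assumes "dd_bounded g 3 R M" and x: "x \<in> {-R<..<R}"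
  shows "g differentiable (at x)"
proof -
  define q where "q y = (g y - g x) / (y - x)" for y
  define X where "X = {-R..R} - {x}"
  have "(max M 0)-lipschitz_on X q"
  proof (rule lipschitz_onI)
    fix y z assume y: "y \<in> X" and z: "z \<in> X"
    show "dist (q y) (q z) \<le> max M 0 * dist y z"
    proof (cases "y = z")
      case False
      have "divided_diff g {y, x} - divided_diff g {z, x} = (y - z) * divided_diff g {y, z, x}"
        using divided_diff_recurrence[of "{x}" y z g] y z False X_def by auto
      moreover have "divided_diff g {y, x} = q y" "divided_diff g {z, x} = q z"
        using divided_diff_pair y z X_def q_def by auto
      ultimately have "dist (q y) (q z) = \<bar>y - z\<bar> * \<bar>divided_diff g {y, z, x}\<bar>"
        by (simp add: dist_real_def abs_mult)
      also have "\<dots> \<le> \<bar>y - z\<bar> * max M 0"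
      proof (intro mult_left_mono)
        have "{y, z, x} \<in> node_sets {-R..R} 3"
          using x y z False X_def by auto
        with assms(1) show "\<bar>divided_diff g {y, z, x}\<bar> \<le> max M 0"
          unfolding dd_bounded_def by fastforce
      qed simp
      finally show ?thesis by (simp add: dist_real_def mult.commute)
    qed simp
  qed simp
  moreover have atX: "at x within X = at x"
    using x at_within_Icc_at[of "-R" x R] by (simp add: X_def at_within_def)
  then have "x \<in> closure X"
    using trivial_limit_within[of x X] by (simp add: closure_def)
  ultimately obtain l where "(q \<longlongrightarrow> l) (at x within X)"
    using uniformly_continuous_on_extension_at_closure lipschitz_on_uniformly_continuous by blast
  then have "(g has_real_derivative l) (at x)"
    unfolding has_field_derivative_iff atX[symmetric] q_def .
  then show ?thesis using real_differentiable_def by blast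
qed

section \<open>Functions with small values on every interval\<close>

text \<open>This is what a finite weighted norm yields near \<open>0\<close>: the weight is bounded below on
  \<open>[-1/2, 1/2]\<close>, so \<open>|f|\<close> cannot exceed \<open>G / (v - u)\<close> everywhere on \<open>[u, v]\<close>.\<close>

definition small_on_intervals :: "(real \<Rightarrow> real) \<Rightarrow> real \<Rightarrow> bool" where
  "small_on_intervals f G \<longleftrightarrow>
     (\<forall>u v. -1/2 \<le> u \<and> u < v \<and> v \<le> 1/2 \<longrightarrow> (\<exists>t\<in>{u..v}. \<bar>f t\<bar> * (v - u) \<le> G))"

lemma divided_diff_separated_nodes_bound:
  assumes "finite I" "l > 0" "\<forall>i\<in>I. \<forall>j\<in>I. i \<noteq> j \<longrightarrow> \<bar>t i - t j\<bar> \<ge> l"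
    and "\<forall>i\<in>I. \<bar>g (t i)\<bar> \<le> B"
  shows "\<bar>divided_diff g (t ` I)\<bar> \<le> real (card I) * B / l ^ (card I - 1)"
proof -
  have inj: "inj_on t I" using assms(2,3) by (force intro: inj_onI)
  have "\<bar>g (t i) / (\<Prod>j\<in>I - {i}. t i - t j)\<bar> \<le> B / l ^ (card I - 1)" if i: "i \<in> I" for i
  proof -
    have "l ^ (card I - 1) = (\<Prod>j\<in>I - {i}. l)" using assms(1) i by (simp add: card_Diff_singleton)
    also have "\<dots> \<le> (\<Prod>j\<in>I - {i}. \<bar>t i - t j\<bar>)"
      using assms(2,3) i by (intro prod_mono) auto
    finally have "l ^ (card I - 1) \<le> \<bar>\<Prod>j\<in>I - {i}. t i - t j\<bar>" by (simp add: abs_prod)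
    then show ?thesis
      unfolding abs_divide using assms(2,4) i by (intro frac_le) auto
  qed
  then have "(\<Sum>i\<in>I. \<bar>g (t i) / (\<Prod>j\<in>I - {i}. t i - t j)\<bar>) \<le> (\<Sum>i\<in>I. B / l ^ (card I - 1))"
    by (rule sum_mono)
  then show ?thesis
    unfolding divided_diff_image[OF inj] using order_trans[OF sum_abs] by fastforce
qed

lemma small_on_intervals_cells:
  assumes "small_on_intervals f G" "-1/2 \<le> u" "l > 0" "u + 2 * real n * l \<le> 1/2"
  obtains t where "\<And>i. i < n \<Longrightarrow> t i \<in> {u + 2 * real i * l..u + (2 * real i + 1) * l}"
    "\<And>i. i < n \<Longrightarrow> \<bar>f (t i)\<bar> \<le> G / l"
proof -
  have "\<exists>t\<in>{u + 2 * real i * l..u + (2 * real i + 1) * l}. \<bar>f t\<bar> * l \<le> G" if "i < n" for i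
  proof -
    have "(2 * real i + 1) * l \<le> 2 * real n * l" using that assms(3) by (intro mult_right_mono) auto
    moreover have "0 \<le> 2 * real i * l" using assms(3) by simp
    ultimately have "-1/2 \<le> u + 2 * real i * l" "u + (2 * real i + 1) * l \<le> 1/2"
      using assms(2,4) by linarith+
    moreover have "u + 2 * real i * l < u + (2 * real i + 1) * l"
      using assms(3) by (simp add: algebra_simps)
    ultimately
    obtain t where "t \<in> {u + 2 * real i * l..u + (2 * real i + 1) * l}"
      "\<bar>f t\<bar> * (u + (2 * real i + 1) * l - (u + 2 * real i * l)) \<le> G"
      using assms(1) unfolding small_on_intervals_def by blast
    then show ?thesis by (intro bexI[of _ t]) (simp_all add: algebra_simps)
  qed
  with that show ?thesis using assms(3) by (metis pos_le_divide_eq)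
qed

text \<open>Reference nodes: one point of small value in every other cell of a partition of
  \<open>[u, v]\<close> into \<open>2 n\<close> cells, so that the nodes are pairwise \<open>(v - u) / (2 n)\<close> apart.\<close>

lemma small_divided_diff_nodes:
  assumes "small_on_intervals f G" "-1/2 \<le> u" "u < v" "v \<le> 1/2" "n \<ge> 1"
  shows "\<exists>T\<in>node_sets {u..v} n. \<bar>divided_diff f T\<bar> \<le> real n * (2 * real n / (v - u)) ^ n * G"
proof -
  define l where "l = (v - u) / (2 * real n)"
  have l: "l > 0" "2 * real n * l = v - u" using assms by (simp_all add: l_def)
  obtain t where t: "\<And>i. i < n \<Longrightarrow> t i \<in> {u + 2 * real i * l..u + (2 * real i + 1) * l}"
    and small: "\<And>i. i < n \<Longrightarrow> \<bar>f (t i)\<bar> \<le> G / l"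
    using small_on_intervals_cells[OF assms(1,2) l(1), of n] l(2) assms(4) by auto
  have sep: "\<bar>t i - t j\<bar> \<ge> l" if "i < n" "j < n" "i \<noteq> j" for i j
  proof -
    have "t j - t i \<ge> l" if "i < n" "j < n" "i < j" for i j
    proof -
      have "(2 * real i + 2) * l \<le> 2 * real j * l" using that l by (intro mult_right_mono) auto
      then show ?thesis using t[of i] t[of j] that by (auto simp: algebra_simps)
    qed
    from this[of i j] this[of j i] that show ?thesis by (cases "i < j") auto
  qed
  have "inj_on t {..<n}" using sep l(1) by (force intro: inj_onI)
  moreover have "t ` {..<n} \<subseteq> {u..v}"
  proof (intro image_subsetI)
    fix i assume "i \<in> {..<n}"
    then have "(2 * real i + 1) * l \<le> 2 * real n * l"
      using l by (intro mult_right_mono) auto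
    moreover have "0 \<le> 2 * real i * l" using l by simp
    moreover have "t i \<in> {u + 2 * real i * l..u + (2 * real i + 1) * l}"
      using t \<open>i \<in> {..<n}\<close> by blast
    ultimately show "t i \<in> {u..v}" unfolding atLeastAtMost_iff using l(2) by linarith
  qed
  moreover have "\<bar>divided_diff f (t ` {..<n})\<bar> \<le> real n * (G / l) / l ^ (n - 1)"
    using divided_diff_separated_nodes_bound[of "{..<n}" l t f "G / l"] l(1) sep small by auto
  moreover have "real n * (G / l) / l ^ (n - 1) = real n * (2 * real n / (v - u)) ^ n * G"
    using l assms(5) by (cases n) (auto simp: field_simps l_def power_divide)
  ultimately show ?thesis by (intro bexI[of _ "t ` {..<n}"]) (auto simp: card_image)
qed

text \<open>The \<open>k\<close>-point divided differences of a \<open>k\<close>-monotone function increase with the nodes,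
  so those with nodes in \<open>[-R, R]\<close> lie between the ones at reference nodes on either side.\<close>

lemma dd_bounded_top_order:
  assumes "dd_nonneg f (Suc k) {-1<..<1}" "small_on_intervals f G" "0 < R" "R < 1/2" "k \<ge> 1"
  shows "dd_bounded f k R (real k * (4 * real k / (1/2 - R)) ^ k * G)"
  unfolding dd_bounded_def
proof
  fix S assume S: "S \<in> node_sets {-R..R} k"
  define c where "c = (R + 1/2) / 2"
  define B where "B = real k * (4 * real k / (1/2 - R)) ^ k * G"
  have c: "R < c" "c < 1/2" "2 * real k / (1/2 - c) = 4 * real k / (1/2 - R)"
    "2 * real k / (- c - (- 1/2)) = 4 * real k / (1/2 - R)"
    using assms(4) by (auto simp: c_def field_simps)
  obtain Tr where Tr: "Tr \<in> node_sets {c..1/2} k" "\<bar>divided_diff f Tr\<bar> \<le> B"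
    using small_divided_diff_nodes[OF assms(2), of c "1/2" k] assms c by (auto simp: B_def)
  obtain Tl where Tl: "Tl \<in> node_sets {-1/2..-c} k" "\<bar>divided_diff f Tl\<bar> \<le> B"
    using small_divided_diff_nodes[OF assms(2), of "-1/2" "-c" k] assms c by (auto simp: B_def)
  have nonneg: "\<forall>U\<in>node_sets X (card S + 1). divided_diff f U \<ge> 0" if "X \<subseteq> {-1<..<1}" for X
    using assms(1) node_sets_mono[OF that] S by (auto simp: dd_nonneg_def)
  have "S \<subseteq> {-R..R}" "Tr \<subseteq> {c..1/2}" "Tl \<subseteq> {-1/2..-c}"
    using S Tr Tl by auto
  then have order: "\<forall>s\<in>S. \<forall>t\<in>Tr. s < t" "\<forall>s\<in>Tl. \<forall>t\<in>S. s < t"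
    and inside: "S \<union> Tr \<subseteq> {-1<..<1}" "Tl \<union> S \<subseteq> {-1<..<1}"
    using c assms(3,4) by fastforce+
  have "divided_diff f S \<le> divided_diff f Tr"
    using divided_diff_mono_nodes[OF _ _ _ order(1) nonneg[OF inside(1)]] S Tr by auto
  moreover have "divided_diff f Tl \<le> divided_diff f S"
    using divided_diff_mono_nodes[OF _ _ _ order(2)] nonneg[OF inside(2)] S Tl by auto
  ultimately show "\<bar>divided_diff f S\<bar> \<le> B" using Tr(2) Tl(2) by auto
qed

text \<open>Comparing with reference nodes to the right of \<open>[-R, R]\<close> costs one divided difference
  of one order higher.\<close>

lemma dd_bounded_lower_order:
  assumes "dd_bounded f (n + 1) R' M" "small_on_intervals f G" "0 < R" "R < R'" "R' \<le> 1/2" "n \<ge> 1"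
  shows "dd_bounded f n R (real n * (4 * real n / (R' - R)) ^ n * G + real n * (2 * R') * M)"
  unfolding dd_bounded_def
proof
  fix S assume S: "S \<in> node_sets {-R..R} n"
  define c where "c = (R + R') / 2"
  have c: "R < c" "c < R'" "2 * real n / (R' - c) = 4 * real n / (R' - R)"
    using assms(4) by (auto simp: c_def field_simps)
  obtain T where T: "T \<in> node_sets {c..R'} n"
    "\<bar>divided_diff f T\<bar> \<le> real n * (4 * real n / (R' - R)) ^ n * G"
    using small_divided_diff_nodes[OF assms(2), of c R' n] assms c by auto
  have "S \<subseteq> {-R..R}" "T \<subseteq> {c..R'}" using S T by auto
  then have inside: "S \<union> T \<subseteq> {-R'..R'}" and disj: "S \<inter> T = {}"
    and dist: "\<forall>s\<in>S. \<forall>t\<in>T. \<bar>s - t\<bar> \<le> 2 * R'"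
    using c assms(3) by fastforce+
  have "\<forall>U\<in>node_sets (S \<union> T) (card S + 1). \<bar>divided_diff f U\<bar> \<le> M"
    using assms(1) S node_sets_mono[OF inside] unfolding dd_bounded_def by auto
  then have "\<bar>divided_diff f S - divided_diff f T\<bar> \<le> real n * (2 * R') * M"
    using divided_diff_close_nodes[OF _ _ _ disj _ dist] S T by auto
  with T(2) show "\<bar>divided_diff f S\<bar> \<le> real n * (4 * real n / (R' - R)) ^ n * G + real n * (2 * R') * M"
    by linarith
qed

definition dd_controlled :: "nat \<Rightarrow> nat \<Rightarrow> nat \<Rightarrow> real \<Rightarrow> bool" where
  "dd_controlled k m n R \<longleftrightarrow> (\<exists>C. \<forall>f G. dd_nonneg f (Suc k) {-1<..<1} \<and> small_on_intervals f G
                                  \<longrightarrow> dd_bounded ((deriv ^^ m) f) n R (C * G))"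

lemma dd_controlled_top_order:
  assumes "k \<ge> 1" "0 < R" "R < 1/2"
  shows "dd_controlled k 0 k R"
  using dd_bounded_top_order assms unfolding dd_controlled_def funpow_0 by blast

lemma dd_controlled_lower_order:
  assumes "dd_controlled k 0 (n + 1) R'" "0 < R" "R < R'" "R' \<le> 1/2" "n \<ge> 1"
  shows "dd_controlled k 0 n R"
proof -
  obtain C where C: "\<forall>f G. dd_nonneg f (Suc k) {-1<..<1} \<and> small_on_intervals f G
                           \<longrightarrow> dd_bounded f (n + 1) R' (C * G)"
    using assms(1) unfolding dd_controlled_def by auto
  have "dd_bounded f n R ((real n * (4 * real n / (R' - R)) ^ n + real n * (2 * R') * C) * G)"
    if "dd_nonneg f (Suc k) {-1<..<1}" "small_on_intervals f G" for f G
  proof -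
    have "dd_bounded f (n + 1) R' (C * G)" using C that by blast
    from dd_bounded_lower_order[OF this that(2) assms(2-5)] show ?thesis
      by (simp add: algebra_simps)
  qed
  then show ?thesis unfolding dd_controlled_def funpow_0 by blast
qed

lemma dd_controlled_function:
  assumes "1 \<le> n" "n \<le> k" "0 < R" "R < 1/2"
  shows "dd_controlled k 0 n R"
  using assms
proof (induction "k - n" arbitrary: n R)
  case 0
  then show ?case using dd_controlled_top_order by simp
next
  case (Suc j)
  define R' where "R' = (R + 1/2) / 2"
  have "R < R'" "R' < 1/2" using Suc.prems by (auto simp: R'_def)
  moreover have "dd_controlled k 0 (n + 1) R'"
    using Suc calculation by (intro Suc.hyps) auto
  ultimately show ?case
    using dd_controlled_lower_order Suc.prems by simp
qed

section \<open>Higher derivatives near the origin\<close>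

text \<open>Each differentiation costs a little of the radius; any decreasing positive sequence
  below \<open>1/2\<close> would do.\<close>

definition rho :: "nat \<Rightarrow> real" where
  "rho m = 1 / (4 * (real m + 1))"

lemma rho_pos: "rho m > 0"
  by (simp add: rho_def)

lemma rho_less_half: "rho m < 1/2"
  by (simp add: rho_def field_simps)

lemma rho_Suc_less: "rho (Suc m) < rho m"
  by (simp add: rho_def field_simps)

lemma dd_nonneg_subset: "dd_nonneg g n X \<Longrightarrow> Y \<subseteq> X \<Longrightarrow> dd_nonneg g n Y"
  unfolding dd_nonneg_def using node_sets_mono by blast

lemma dd_controlled_deriv:
  assumes "dd_controlled k m (n + 1) R" "dd_controlled k m 3 R" "R' < R"
  shows "dd_controlled k (Suc m) n R'"
proof -
  obtain C C3 where
    C: "\<forall>f G. dd_nonneg f (Suc k) {-1<..<1} \<and> small_on_intervals f G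
              \<longrightarrow> dd_bounded ((deriv ^^ m) f) (n + 1) R (C * G)" and
    C3: "\<forall>f G. dd_nonneg f (Suc k) {-1<..<1} \<and> small_on_intervals f G
              \<longrightarrow> dd_bounded ((deriv ^^ m) f) 3 R (C3 * G)"
    using assms(1,2) unfolding dd_controlled_def by blast
  have "dd_bounded ((deriv ^^ Suc m) f) n R' ((real n * C) * G)"
    if "dd_nonneg f (Suc k) {-1<..<1}" "small_on_intervals f G" for f G
  proof -
    have "\<forall>x\<in>{-R<..<R}. (deriv ^^ m) f differentiable (at x)"
      using differentiable_if_dd_bounded C3 that by blast
    with dd_bounded_deriv[of "(deriv ^^ m) f" n R "C * G" R'] C that assms(3)
    show ?thesis by (simp add: mult.assoc)
  qed
  then show ?thesis unfolding dd_controlled_def by blast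
qed

lemma dd_controlled_iterated_deriv:
  assumes "m = 0 \<or> m + 2 \<le> k" "1 \<le> n" "n + m \<le> k"
  shows "dd_controlled k m n (rho m)"
  using assms
proof (induction m arbitrary: n)
  case 0
  then show ?case using dd_controlled_function rho_pos rho_less_half by simp
next
  case (Suc m)
  then have "dd_controlled k m (n + 1) (rho m)" "dd_controlled k m 3 (rho m)" by auto
  then show ?case using dd_controlled_deriv rho_Suc_less by blast
qed

lemma differentiable_iterated_deriv:
  assumes "m + 3 \<le> k" "dd_nonneg f (Suc k) {-1<..<1}" "small_on_intervals f G"
    and "x \<in> {-rho m<..<rho m}"
  shows "(deriv ^^ m) f differentiable (at x)"
proof -
  have "dd_controlled k m 3 (rho m)"
    using assms(1) by (intro dd_controlled_iterated_deriv) auto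
  then obtain C where "dd_bounded ((deriv ^^ m) f) 3 (rho m) (C * G)"
    using assms(2,3) unfolding dd_controlled_def by blast
  then show ?thesis using differentiable_if_dd_bounded assms(4) by blast
qed

lemma dd_nonneg_iterated_deriv:
  assumes "m = 0 \<or> m + 2 \<le> k" "dd_nonneg f (Suc k) {-1<..<1}" "small_on_intervals f G"
  shows "dd_nonneg ((deriv ^^ m) f) (k - m + 1) {-rho m..rho m}"
  using assms(1)
proof (induction m)
  case 0
  have "{-rho 0..rho 0} \<subseteq> {-1<..<1}" using rho_less_half[of 0] by auto
  then show ?case using dd_nonneg_subset assms(2) by simp
next
  case (Suc m)
  then have "dd_nonneg ((deriv ^^ m) f) ((k - Suc m + 1) + 1) {-rho m..rho m}"
    by (simp add: Suc_diff_Suc)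
  moreover have "\<forall>x\<in>{-rho m<..<rho m}. (deriv ^^ m) f differentiable (at x)"
    using Suc.prems assms(2,3) by (intro ballI differentiable_iterated_deriv) auto
  ultimately have "dd_nonneg (deriv ((deriv ^^ m) f)) (k - Suc m + 1) {-rho (Suc m)..rho (Suc m)}"
    by (rule dd_nonneg_deriv[OF _ _ rho_Suc_less])
  then show ?case by simp
qed

section \<open>The Taylor coefficients\<close>

definition uniformly_controlled :: "nat \<Rightarrow> ((real \<Rightarrow> real) \<Rightarrow> real) \<Rightarrow> bool" where
  "uniformly_controlled k \<Phi> \<longleftrightarrow> (\<exists>C. \<forall>f G. dd_nonneg f (Suc k) {-1<..<1} \<and> small_on_intervals f G
                                       \<longrightarrow> \<bar>\<Phi> f\<bar> \<le> C * G)"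

lemma uniformly_controlled_abs_iff [simp]:
  "uniformly_controlled k (\<lambda>f. \<bar>\<Phi> f\<bar>) \<longleftrightarrow> uniformly_controlled k \<Phi>"
  by (simp add: uniformly_controlled_def)

lemma uniformly_controlled_add:
  assumes "uniformly_controlled k \<Phi>" "uniformly_controlled k \<Psi>"
  shows "uniformly_controlled k (\<lambda>f. \<Phi> f + \<Psi> f)"
proof -
  obtain C D where "\<forall>f G. dd_nonneg f (Suc k) {-1<..<1} \<and> small_on_intervals f G \<longrightarrow> \<bar>\<Phi> f\<bar> \<le> C * G"
    "\<forall>f G. dd_nonneg f (Suc k) {-1<..<1} \<and> small_on_intervals f G \<longrightarrow> \<bar>\<Psi> f\<bar> \<le> D * G"
    using assms unfolding uniformly_controlled_def by blast
  then have "\<forall>f G. dd_nonneg f (Suc k) {-1<..<1} \<and> small_on_intervals f G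
               \<longrightarrow> \<bar>\<Phi> f + \<Psi> f\<bar> \<le> (C + D) * G"
    by (smt (verit, best) distrib_right)
  then show ?thesis unfolding uniformly_controlled_def by blast
qed

lemma uniformly_controlled_sum:
  assumes "finite I" "\<forall>i\<in>I. uniformly_controlled k (\<Phi> i)"
  shows "uniformly_controlled k (\<lambda>f. \<Sum>i\<in>I. \<Phi> i f)"
  using assms
proof (induction I rule: finite_induct)
  case empty
  then show ?case by (auto simp: uniformly_controlled_def intro: exI[of _ 0])
next
  case (insert i I)
  then show ?case by (simp add: uniformly_controlled_add)
qed

lemma uniformly_controlled_iterated_deriv_at_0:
  assumes "i + 2 \<le> k"
  shows "uniformly_controlled k (\<lambda>f. (deriv ^^ i) f 0)"
proof -
  have "dd_controlled k i 1 (rho i)"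
    using assms by (intro dd_controlled_iterated_deriv) auto
  moreover have "{0} \<in> node_sets {-rho i..rho i} 1" using rho_pos[of i] by simp
  ultimately show ?thesis
    unfolding dd_controlled_def uniformly_controlled_def dd_bounded_def
    by (metis divided_diff_singleton)
qed

lemma left_limit_abs_le:
  fixes \<phi> :: "real \<Rightarrow> real"
  assumes "r > 0" "mono_on {-r<..<0} \<phi>" "\<forall>h\<in>{-r<..<0}. \<bar>\<phi> h\<bar> \<le> B"
  shows "\<bar>Lim (at_left 0) \<phi>\<bar> \<le> B"
proof -
  have "at 0 within ({..<0} \<inter> {-r<..}) = at_left (0::real)"
    using assms(1) by (intro at_within_nhd[of 0 "{-r<..}"]) auto
  moreover have "(\<phi> \<longlongrightarrow> Sup (\<phi> ` ({..<0} \<inter> {-r<..}))) (at 0 within ({..<0} \<inter> {-r<..}))"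
    using assms(2,3) by (intro Lim_left_bound[where K = B]) (auto simp: abs_le_iff mono_on_def)
  ultimately have lim: "(\<phi> \<longlongrightarrow> Sup (\<phi> ` ({..<0} \<inter> {-r<..}))) (at_left 0)" by simp
  have "\<forall>\<^sub>F h in at_left 0. norm (\<phi> h) \<le> B"
    using assms(1,3) by (subst eventually_at_left[of "-r"]) (auto intro!: exI[of _ "-r"])
  then show ?thesis using Lim_norm_ubound[OF _ lim] tendsto_Lim[OF _ lim] by simp
qed

text \<open>Positivity with one node more makes \<open>h \<mapsto> divided_diff g (insert h A)\<close> increasing for
  \<open>h < 0\<close>, so its left limit at \<open>0\<close> exists and inherits the bound.\<close>

lemma uniformly_controlled_left_limit:
  assumes "dd_controlled k m (card A + 1) (rho m)"
    and "\<forall>f G. dd_nonneg f (Suc k) {-1<..<1} \<and> small_on_intervals f G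
            \<longrightarrow> dd_nonneg ((deriv ^^ m) f) (card A + 2) {-rho m..rho m}"
    and "finite A" "A \<subseteq> {0..rho m}"
  shows "uniformly_controlled k (\<lambda>f. Lim (at_left 0) (\<lambda>h. divided_diff ((deriv ^^ m) f) (insert h A)))"
proof -
  obtain C where C: "\<forall>f G. dd_nonneg f (Suc k) {-1<..<1} \<and> small_on_intervals f G
                           \<longrightarrow> dd_bounded ((deriv ^^ m) f) (card A + 1) (rho m) (C * G)"
    using assms(1) unfolding dd_controlled_def by blast
  have "\<bar>Lim (at_left 0) (\<lambda>h. divided_diff ((deriv ^^ m) f) (insert h A))\<bar> \<le> C * G"
    if hyp: "dd_nonneg f (Suc k) {-1<..<1}" "small_on_intervals f G" for f G
  proof (rule left_limit_abs_le[OF rho_pos])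
    have A: "h \<notin> A" "insert h A \<subseteq> {-rho m..rho m}" if "h \<in> {-rho m<..<0}" for h
      using assms(4) that by auto
    show "\<forall>h\<in>{-rho m<..<0}. \<bar>divided_diff ((deriv ^^ m) f) (insert h A)\<bar> \<le> C * G"
      using C hyp A assms(3) unfolding dd_bounded_def by auto
    show "mono_on {-rho m<..<0} (\<lambda>h. divided_diff ((deriv ^^ m) f) (insert h A))"
    proof (rule mono_onI, rule divided_diff_insert_mono[OF assms(3)])
      fix h1 h2 assume h: "h1 \<in> {-rho m<..<0}" "h2 \<in> {-rho m<..<0}" "h1 \<le> h2"
      then show "h1 \<notin> A" "h2 \<notin> A" "h1 \<le> h2" using A by auto
      assume "h1 \<noteq> h2"
      then have "insert h2 (insert h1 A) \<in> node_sets {-rho m..rho m} (card A + 2)"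
        using A[OF h(1)] A[OF h(2)] assms(3) by auto
      then show "divided_diff ((deriv ^^ m) f) (insert h2 (insert h1 A)) \<ge> 0"
        using assms(2) hyp unfolding dd_nonneg_def by blast
    qed
  qed
  then show ?thesis unfolding uniformly_controlled_def by blast
qed

lemma uniformly_controlled_leftder:
  assumes "k \<ge> 1"
  shows "uniformly_controlled k (leftder k)"
proof (cases "k = 1")
  case True
  have "uniformly_controlled k (\<lambda>f. Lim (at_left 0) (\<lambda>h. divided_diff ((deriv ^^ 0) f) (insert h {})))"
    using True dd_controlled_iterated_deriv[where m = 0 and n = 1 and k = k] dd_nonneg_iterated_deriv[of 0 k]
    by (intro uniformly_controlled_left_limit) (auto simp: numeral_2_eq_2)
  then show ?thesis using True unfolding leftder_def[abs_def] by simp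
next
  case False
  define m where "m = k - 2"
  have m: "m + 2 = k" using assms False by (simp add: m_def)
  have "uniformly_controlled k (\<lambda>f. Lim (at_left 0) (\<lambda>h. divided_diff ((deriv ^^ m) f) (insert h {0})))"
    using m dd_controlled_iterated_deriv[where m = m and n = 2 and k = k] dd_nonneg_iterated_deriv[of m k] rho_pos[of m]
    by (intro uniformly_controlled_left_limit) (auto simp: numeral_2_eq_2 numeral_3_eq_3)
  moreover have "Lim (at_left 0) (\<lambda>h. divided_diff ((deriv ^^ m) f) {h, 0}) = leftder k f" for f
  proof -
    have "\<forall>\<^sub>F h in at_left 0. divided_diff ((deriv ^^ m) f) {h, 0}
            = ((deriv ^^ m) f h - (deriv ^^ m) f 0) / h"
      using divided_diff_pair[of 0 _ "(deriv ^^ m) f"] eventually_at_left_real[of "-1" 0]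
      by (auto elim: eventually_mono)
    then show ?thesis using False by (simp add: leftder_def m_def cong: Lim_cong)
  qed
  ultimately show ?thesis by simp
qed

lemma abs_Taylor_le:
  assumes "\<bar>x\<bar> \<le> 1"
  shows "\<bar>Taylor k f x\<bar> \<le> \<bar>leftder k f\<bar> + (\<Sum>i<k - 1. \<bar>(deriv ^^ i) f 0\<bar>)"
proof -
  have term_le: "\<bar>c * x ^ n / fact n\<bar> \<le> \<bar>c\<bar>" for c n
  proof -
    have "\<bar>x ^ n\<bar> \<le> 1" using assms by (simp add: power_abs power_le_one)
    then have "\<bar>x ^ n\<bar> / fact n \<le> 1" by (simp add: divide_le_eq order_trans[OF _ fact_ge_1])
    from mult_left_le[OF this abs_ge_zero[of c]] show ?thesis by (simp add: abs_mult)
  qed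
  have "\<bar>Taylor k f x\<bar> \<le> \<bar>leftder k f * x ^ (k - 1) / fact (k - 1)\<bar>
                           + (\<Sum>i<k - 1. \<bar>(deriv ^^ i) f 0 * x ^ i / fact i\<bar>)"
    unfolding Taylor_def by (rule order_trans[OF abs_triangle_ineq add_left_mono[OF sum_abs]])
  also have "\<dots> \<le> \<bar>leftder k f\<bar> + (\<Sum>i<k - 1. \<bar>(deriv ^^ i) f 0\<bar>)"
    by (intro add_mono sum_mono term_le)
  finally show ?thesis .
qed

lemma uniformly_controlled_Taylor:
  assumes "k \<ge> 1"
  obtains C where "\<forall>f G. dd_nonneg f (Suc k) {-1<..<1} \<and> small_on_intervals f G
                      \<longrightarrow> (\<forall>x\<in>{-1..1}. \<bar>Taylor k f x\<bar> \<le> C * G)"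
proof -
  have "uniformly_controlled k (\<lambda>f. \<bar>leftder k f\<bar> + (\<Sum>i<k - 1. \<bar>(deriv ^^ i) f 0\<bar>))"
    using assms uniformly_controlled_leftder uniformly_controlled_iterated_deriv_at_0
    by (intro uniformly_controlled_add uniformly_controlled_sum) auto
  then obtain C where C: "\<forall>f G. dd_nonneg f (Suc k) {-1<..<1} \<and> small_on_intervals f G
      \<longrightarrow> \<bar>\<bar>leftder k f\<bar> + (\<Sum>i<k - 1. \<bar>(deriv ^^ i) f 0\<bar>)\<bar> \<le> C * G"
    unfolding uniformly_controlled_def by blast
  have "\<bar>Taylor k f x\<bar> \<le> C * G"
    if "dd_nonneg f (Suc k) {-1<..<1}" "small_on_intervals f G" "x \<in> {-1..1}" for f G x
  proof -
    have "\<bar>Taylor k f x\<bar> \<le> \<bar>leftder k f\<bar> + (\<Sum>i<k - 1. \<bar>(deriv ^^ i) f 0\<bar>)"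
      using that(3) by (intro abs_Taylor_le) auto
    also have "\<dots> \<le> C * G"
      using C that(1,2) by (simp add: sum_nonneg)
    finally show ?thesis .
  qed
  with that show ?thesis by blast
qed

section \<open>Weighted norms\<close>

lemma Lp_norm_finite_exponent:
  assumes "1 \<le> p" "p \<noteq> \<infinity>"
  obtains r where "1 \<le> r" "p = ennreal r"
    "\<And>g. Lp_norm p g =
       (let I = \<integral>\<^sup>+ x. ennreal (\<bar>g x\<bar> powr r) * indicator {-1..1} x \<partial>lebesgue
        in if I = \<infinity> then \<infinity> else ennreal (enn2real I powr (1 / r)))"
proof
  show "p = ennreal (enn2real p)" using assms(2) by (simp add: ennreal_enn2real less_top)
  with assms(1) show "1 \<le> enn2real p"
    by (metis ennreal_le_iff enn2real_nonneg ennreal_1)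
qed (use assms(2) in \<open>simp add: Lp_norm_def Let_def\<close>)

lemma jw_nonneg: "jw a b x \<ge> 0"
  by (simp add: jw_def)

lemma jw_measurable [measurable]: "jw a b \<in> borel_measurable borel"
  unfolding jw_def[abs_def] by measurable

lemma Taylor_measurable [measurable]: "Taylor k f \<in> borel_measurable borel"
  unfolding Taylor_def[abs_def] by measurable

lemma jw_lower_bound: "\<exists>m>0. \<forall>x\<in>{-1/2..1/2}. m \<le> jw a b x"
proof -
  have "\<exists>m>0. \<forall>y\<in>{1/2..3/2::real}. m \<le> y powr c" for c :: real
  proof (cases "c \<ge> 0")
    case True
    then show ?thesis by (intro exI[of _ "(1/2) powr c"]) (auto intro!: powr_mono2)
  next
    case False
    then show ?thesis by (intro exI[of _ "(3/2) powr c"]) (auto intro!: powr_mono2')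
  qed
  then obtain ma mb where "ma > 0" "\<forall>y\<in>{1/2..3/2::real}. ma \<le> y powr a"
    "mb > 0" "\<forall>y\<in>{1/2..3/2::real}. mb \<le> y powr b"
    by meson
  then show ?thesis
    unfolding jw_def by (intro exI[of _ "ma * mb"]) (auto intro!: mult_mono)
qed

lemma esssup_ge_on_interval:
  fixes g :: "real \<Rightarrow> real"
  assumes "-1 \<le> u" "u < v" "v \<le> 1" "\<forall>x\<in>{u..v}. \<delta> \<le> \<bar>g x\<bar>"
  shows "ennreal \<delta> \<le> esssup lebesgue (\<lambda>x. ennreal \<bar>g x\<bar> * indicator {-1..1} x)"
proof (rule ccontr)
  define F where "F = (\<lambda>x. ennreal \<bar>g x\<bar> * indicator {-1..1::real} x)"
  assume "\<not> ennreal \<delta> \<le> esssup lebesgue (\<lambda>x. ennreal \<bar>g x\<bar> * indicator {-1..1} x)"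
  then have "AE x in lebesgue. F x < ennreal \<delta>"
    using esssup_AE[of F lebesgue] by (auto simp: F_def elim: eventually_mono)
  then have "AE x in lebesgue. x \<notin> {u..v}"
  proof eventually_elim
    case (elim x)
    show ?case
    proof
      assume x: "x \<in> {u..v}"
      then have "ennreal \<delta> \<le> F x"
        using assms(1,3,4) by (simp add: F_def ennreal_leI)
      with elim show False by simp
    qed
  qed
  then have "emeasure lebesgue {u..v} = 0"
    by (subst (asm) AE_iff_measurable[of "{u..v}"]) auto
  then show False using assms(2) by simp
qed

lemma Lp_norm_ge_interval:
  assumes "1 \<le> p" "-1 \<le> u" "u < v" "v \<le> 1" "v - u \<le> 1" "\<delta> \<ge> 0"
    and lower: "\<forall>x\<in>{u..v}. \<delta> \<le> \<bar>g x\<bar>"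
  shows "ennreal (\<delta> * (v - u)) \<le> Lp_norm p g"
proof (cases "p = \<infinity>")
  case True
  have "ennreal (\<delta> * (v - u)) \<le> ennreal \<delta>"
    using assms(3,5,6) by (intro ennreal_leI) (simp add: mult_left_le)
  with esssup_ge_on_interval[OF assms(2-4) lower] True show ?thesis
    by (simp add: Lp_norm_def)
next
  case False
  obtain r where r: "1 \<le> r" and norm: "\<And>g. Lp_norm p g =
       (let I = \<integral>\<^sup>+ x. ennreal (\<bar>g x\<bar> powr r) * indicator {-1..1} x \<partial>lebesgue
        in if I = \<infinity> then \<infinity> else ennreal (enn2real I powr (1 / r)))"
    using Lp_norm_finite_exponent[OF assms(1) False] by blast
  define I where "I = (\<integral>\<^sup>+ x. ennreal (\<bar>g x\<bar> powr r) * indicator {-1..1} x \<partial>lebesgue)"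
  have "ennreal (\<delta> powr r * (v - u)) = (\<integral>\<^sup>+ x. ennreal (\<delta> powr r) * indicator {u..v} x \<partial>lebesgue)"
    using assms(3) by (simp add: nn_integral_cmult_indicator ennreal_mult')
  also have "\<dots> \<le> I"
    unfolding I_def using assms(2,4,6) lower r
    by (intro nn_integral_mono) (auto simp: indicator_def intro!: ennreal_leI powr_mono2)
  finally have lowI: "ennreal (\<delta> powr r * (v - u)) \<le> I" .
  show ?thesis
  proof (cases "I = \<infinity>")
    case True then show ?thesis by (simp add: norm I_def[symmetric])
  next
    case False
    have "(v - u) powr 1 \<le> (v - u) powr (1 / r)"
      using assms(3,5) r by (intro powr_mono') auto
    then have "\<delta> * (v - u) \<le> \<delta> * (v - u) powr (1 / r)"
      using assms(3,6) by (intro mult_left_mono) auto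
    also have "\<dots> = (\<delta> powr r * (v - u)) powr (1 / r)"
      using assms(3,6) r by (simp add: powr_mult powr_powr)
    also have "\<dots> \<le> enn2real I powr (1 / r)"
      using enn2real_mono[OF lowI] False assms(3) r by (intro powr_mono2) (auto simp: less_top)
    finally show ?thesis using False by (simp add: norm I_def[symmetric] ennreal_leI)
  qed
qed

lemma small_on_intervals_if_Lp_norm:
  assumes "1 \<le> p" "Lp_norm p (\<lambda>x. jw a b x * f x) = ennreal \<Lambda>" "\<Lambda> \<ge> 0"
    and "m > 0" "\<forall>x\<in>{-1/2..1/2}. m \<le> jw a b x" "\<epsilon> > 0"
  shows "small_on_intervals f ((\<Lambda> + \<epsilon>) / m)"
  unfolding small_on_intervals_def
proof (intro allI impI)
  fix u v :: real assume uv: "-1/2 \<le> u \<and> u < v \<and> v \<le> 1/2"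
  show "\<exists>t\<in>{u..v}. \<bar>f t\<bar> * (v - u) \<le> (\<Lambda> + \<epsilon>) / m"
  proof (rule ccontr)
    assume large: "\<not> ?thesis"
    have "m * ((\<Lambda> + \<epsilon>) / m / (v - u)) \<le> \<bar>jw a b x * f x\<bar>" if x: "x \<in> {u..v}" for x
    proof -
      have "\<not> \<bar>f x\<bar> * (v - u) \<le> (\<Lambda> + \<epsilon>) / m" using large x by blast
      then have "(\<Lambda> + \<epsilon>) / m < \<bar>f x\<bar> * (v - u)" by simp
      then have "(\<Lambda> + \<epsilon>) / m / (v - u) < \<bar>f x\<bar>"
        using uv by (subst pos_divide_less_eq) auto
      moreover have "m \<le> jw a b x" using assms(5) x uv by auto
      moreover have "0 \<le> (\<Lambda> + \<epsilon>) / m / (v - u)" using assms(3,4,6) uv by simp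
      ultimately have "m * ((\<Lambda> + \<epsilon>) / m / (v - u)) \<le> jw a b x * \<bar>f x\<bar>"
        using jw_nonneg[of a b x] by (intro mult_mono) auto
      then show ?thesis using jw_nonneg[of a b x] by (simp add: abs_mult)
    qed
    then have "ennreal (m * ((\<Lambda> + \<epsilon>) / m / (v - u)) * (v - u)) \<le> Lp_norm p (\<lambda>x. jw a b x * f x)"
      by (intro Lp_norm_ge_interval[OF assms(1)]) (use uv assms(3,4,6) in auto)
    moreover have "m * ((\<Lambda> + \<epsilon>) / m / (v - u)) * (v - u) = \<Lambda> + \<epsilon>"
      using uv assms(4) by (simp add: field_simps)
    ultimately show False using assms(2,3,6) by (simp add: ennreal_le_iff)
  qed
qed

lemma esssup_le_scaled:
  fixes g h :: "real \<Rightarrow> real"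
  assumes "B \<ge> 0" "\<forall>x\<in>{-1..1}. \<bar>g x\<bar> \<le> B * \<bar>h x\<bar>" and [measurable]: "g \<in> borel_measurable borel"
  shows "esssup lebesgue (\<lambda>x. ennreal \<bar>g x\<bar> * indicator {-1..1} x)
           \<le> ennreal B * esssup lebesgue (\<lambda>x. ennreal \<bar>h x\<bar> * indicator {-1..1} x)"
proof (rule esssup_I)
  have pointwise: "ennreal \<bar>g x\<bar> * indicator {-1..1} x \<le> ennreal B * (ennreal \<bar>h x\<bar> * indicator {-1..1} x)"
    for x
    using assms(1,2) by (auto simp: indicator_def ennreal_mult[symmetric] intro!: ennreal_leI)
  show "(\<lambda>x. ennreal \<bar>g x\<bar> * indicator {-1..1} x) \<in> borel_measurable lebesgue"
    by (rule measurable_completion) measurable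
  show "AE x in lebesgue. ennreal \<bar>g x\<bar> * indicator {-1..1} x
          \<le> ennreal B * esssup lebesgue (\<lambda>x. ennreal \<bar>h x\<bar> * indicator {-1..1} x)"
    using esssup_AE[of "\<lambda>x. ennreal \<bar>h x\<bar> * indicator {-1..1} x" lebesgue]
    by eventually_elim (rule order_trans[OF pointwise mult_left_mono], auto)
qed

lemma Lp_norm_le_scaled:
  assumes "1 \<le> p" "B \<ge> 0" "\<forall>x\<in>{-1..1}. \<bar>g x\<bar> \<le> B * \<bar>h x\<bar>"
    and [measurable]: "g \<in> borel_measurable borel" "h \<in> borel_measurable borel"
    and "Lp_norm p h < \<infinity>"
  shows "Lp_norm p g \<le> ennreal B * Lp_norm p h"
proof (cases "p = \<infinity>")
  case True
  then show ?thesis using esssup_le_scaled[OF assms(2-4)] by (simp add: Lp_norm_def)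
next
  case False
  obtain r where r: "1 \<le> r" and norm: "\<And>g. Lp_norm p g =
       (let I = \<integral>\<^sup>+ x. ennreal (\<bar>g x\<bar> powr r) * indicator {-1..1} x \<partial>lebesgue
        in if I = \<infinity> then \<infinity> else ennreal (enn2real I powr (1 / r)))"
    using Lp_norm_finite_exponent[OF assms(1) False] by blast
  define Ig where "Ig = (\<integral>\<^sup>+ x. ennreal (\<bar>g x\<bar> powr r) * indicator {-1..1} x \<partial>lebesgue)"
  define Ih where "Ih = (\<integral>\<^sup>+ x. ennreal (\<bar>h x\<bar> powr r) * indicator {-1..1} x \<partial>lebesgue)"
  have Ih: "Ih \<noteq> \<infinity>" using assms(6) by (auto simp: norm Ih_def[symmetric])
  have "Ig \<le> (\<integral>\<^sup>+ x. ennreal (B powr r) * (ennreal (\<bar>h x\<bar> powr r) * indicator {-1..1} x) \<partial>lebesgue)"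
    unfolding Ig_def
  proof (intro nn_integral_mono)
    fix x
    have "\<bar>g x\<bar> powr r \<le> B powr r * \<bar>h x\<bar> powr r" if "x \<in> {-1..1}"
      using assms(2,3) that r powr_mono2[of r "\<bar>g x\<bar>" "B * \<bar>h x\<bar>"] by (simp add: powr_mult)
    then show "ennreal (\<bar>g x\<bar> powr r) * indicator {-1..1} x
                 \<le> ennreal (B powr r) * (ennreal (\<bar>h x\<bar> powr r) * indicator {-1..1} x)"
      by (simp add: indicator_def ennreal_mult[symmetric] ennreal_leI)
  qed
  also have "\<dots> = ennreal (B powr r) * Ih"
    unfolding Ih_def by (rule nn_integral_cmult) (rule measurable_completion, measurable)
  finally have IgIh: "Ig \<le> ennreal (B powr r) * Ih" .
  then have Ig: "Ig \<noteq> \<infinity>" using Ih by (auto simp: ennreal_mult_eq_top_iff top_unique)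
  have "enn2real Ig powr (1 / r) \<le> (B powr r * enn2real Ih) powr (1 / r)"
    using enn2real_mono[OF IgIh] Ih r
    by (intro powr_mono2) (auto simp: enn2real_mult ennreal_mult_less_top less_top)
  also have "\<dots> = B * enn2real Ih powr (1 / r)"
    using assms(2) r by (simp add: powr_mult powr_powr)
  finally show ?thesis
    using assms(2) Ig Ih by (simp add: norm Ig_def[symmetric] Ih_def[symmetric] ennreal_mult[symmetric] ennreal_leI)
qed

lemma has_integral_one_plus_powr:
  assumes "c > (-1::real)"
  shows "((\<lambda>x. (1 + x) powr c) has_integral (2 powr (c + 1) / (c + 1))) {-1..1}"
proof -
  have "((\<lambda>x. x powr c) has_integral (2 powr (c + 1) / (c + 1))) (cbox 0 2)"
    using has_integral_powr_from_0[OF assms, of 2] by simp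
  from has_integral_affinity'[OF this, of 1 1] show ?thesis by (simp add: add.commute)
qed

lemma has_integral_one_minus_powr:
  assumes "c > (-1::real)"
  shows "((\<lambda>x. (1 - x) powr c) has_integral (2 powr (c + 1) / (c + 1))) {-1..1}"
proof -
  have "((\<lambda>x. (1 + (-x)) powr c) has_integral (2 powr (c + 1) / (c + 1))) {-1..-(-1)}"
    using has_integral_one_plus_powr[OF assms] by (subst has_integral_reflect_real) simp
  then show ?thesis by simp
qed

lemma powr_le_max_one:
  assumes "1 \<le> y" "y \<le> (2::real)"
  shows "y powr c \<le> max 1 (2 powr c)"
  using assms powr_mono2[of c y 2] powr_mono2'[of c 1 y] by (cases "c \<ge> 0") auto

lemma one_plus_times_one_minus_powr_le:
  fixes c d x :: real
  assumes "x \<in> {-1..1}"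
  shows "(1 + x) powr c * (1 - x) powr d
           \<le> (max 1 (2 powr c) + max 1 (2 powr d)) * ((1 + x) powr c + (1 - x) powr d)"
proof -
  define K where "K = max 1 (2 powr c) + max 1 (2 powr d)"
  define P Q where "P = (1 + x) powr c" and "Q = (1 - x) powr d"
  have "Q \<le> K \<or> P \<le> K"
    using assms powr_le_max_one[of "1 - x" d] powr_le_max_one[of "1 + x" c]
    unfolding K_def P_def Q_def by (cases "x \<le> 0") force+
  then have "P * Q \<le> K * P \<or> P * Q \<le> K * Q"
    using mult_left_mono[of Q K P] mult_right_mono[of P K Q] by (auto simp: P_def Q_def mult.commute)
  moreover have "0 \<le> K * P" "0 \<le> K * Q" by (simp_all add: K_def P_def Q_def add_nonneg_nonneg)
  ultimately show ?thesis unfolding K_def[symmetric] P_def[symmetric] Q_def[symmetric] distrib_left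
    by linarith
qed

text \<open>This is where \<open>\<alpha>, \<beta> \<in> J_p\<close> enters: for \<open>p < \<infinity>\<close>, \<open>w^p\<close> is dominated by a multiple of
  \<open>(1 + x)^(\<alpha> p) + (1 - x)^(\<beta> p)\<close>, integrable since \<open>\<alpha> p, \<beta> p > -1\<close>.\<close>

lemma nn_integral_jw_powr_finite:
  assumes "a * r > -1" "b * r > -1"
  shows "(\<integral>\<^sup>+ x. ennreal (\<bar>jw a b x\<bar> powr r) * indicator {-1..1} x \<partial>lebesgue) < \<infinity>"
proof -
  define K where "K = max 1 (2 powr (a * r)) + max 1 (2 powr (b * r))"
  define H where "H x = K * ((1 + x) powr (a * r) + (1 - x) powr (b * r))" for x
  define V where "V = K * (2 powr (a * r + 1) / (a * r + 1) + 2 powr (b * r + 1) / (b * r + 1))"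
  have H_int: "(H has_integral V) {-1..1}"
    unfolding H_def[abs_def] V_def
    by (intro has_integral_mult_right has_integral_add has_integral_one_plus_powr
        has_integral_one_minus_powr assms)
  have integral: "(\<integral>\<^sup>+ x. ennreal (indicator {-1..1} x * H x) \<partial>lborel) = ennreal V"
    by (rule nn_integral_has_integral_lebesgue[OF _ H_int]) (simp add: H_def K_def)
  have "\<bar>jw a b x\<bar> powr r \<le> H x" if "x \<in> {-1..1}" for x
    using that one_plus_times_one_minus_powr_le[OF that, of "a * r" "b * r"]
    by (simp add: H_def K_def jw_def powr_mult powr_powr abs_mult)
  then have "(\<integral>\<^sup>+ x. ennreal (\<bar>jw a b x\<bar> powr r) * indicator {-1..1} x \<partial>lebesgue)
               \<le> (\<integral>\<^sup>+ x. ennreal (indicator {-1..1} x * H x) \<partial>lborel)"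
    by (subst nn_integral_completion[symmetric])
       (auto simp: indicator_def intro!: nn_integral_mono ennreal_leI)
  then show ?thesis unfolding integral by (rule le_less_trans) simp
qed

lemma Lp_norm_jw_finite:
  assumes "1 \<le> p" "a \<in> Jp p" "b \<in> Jp p"
  shows "Lp_norm p (jw a b) < \<infinity>"
proof (cases "p = \<infinity>")
  case True
  then have "a \<ge> 0" "b \<ge> 0" using assms(2,3) by (auto simp: Jp_def)
  then have "ennreal \<bar>jw a b x\<bar> * indicator {-1..1} x \<le> ennreal (2 powr a * 2 powr b)" for x
    unfolding jw_def by (auto simp: indicator_def intro!: ennreal_leI mult_mono powr_mono2)
  then have "esssup lebesgue (\<lambda>x. ennreal \<bar>jw a b x\<bar> * indicator {-1..1} x) \<le> ennreal (2 powr a * 2 powr b)"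
    by (intro esssup_I) (auto intro: measurable_completion)
  then show ?thesis using True by (simp add: Lp_norm_def top.not_eq_extremum le_less_trans)
next
  case False
  obtain r where r: "1 \<le> r" "p = ennreal r" and norm: "\<And>g. Lp_norm p g =
       (let I = \<integral>\<^sup>+ x. ennreal (\<bar>g x\<bar> powr r) * indicator {-1..1} x \<partial>lebesgue
        in if I = \<infinity> then \<infinity> else ennreal (enn2real I powr (1 / r)))"
    using Lp_norm_finite_exponent[OF assms(1) False] by blast
  have "a * r > -1" "b * r > -1"
    using assms(2,3) False r by (auto simp: Jp_def field_simps)
  from nn_integral_jw_powr_finite[OF this] show ?thesis by (simp add: norm Let_def)
qed

lemma Taylor_bounded_by_weighted_norm:
  assumes "k \<ge> 1" "1 \<le> p"
  obtains C where "C \<ge> 0"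
    "\<And>f \<Lambda> x. kmono k f \<Longrightarrow> Lp_norm p (\<lambda>x. jw a b x * f x) = ennreal \<Lambda> \<Longrightarrow> \<Lambda> \<ge> 0
       \<Longrightarrow> x \<in> {-1..1} \<Longrightarrow> \<bar>Taylor k f x\<bar> \<le> C * \<Lambda>"
proof -
  obtain C where C: "\<forall>f G. dd_nonneg f (Suc k) {-1<..<1} \<and> small_on_intervals f G
                           \<longrightarrow> (\<forall>x\<in>{-1..1}. \<bar>Taylor k f x\<bar> \<le> C * G)"
    using uniformly_controlled_Taylor[OF assms(1)] by blast
  obtain m where m: "m > 0" "\<forall>x\<in>{-1/2..1/2}. m \<le> jw a b x"
    using jw_lower_bound by blast
  define D where "D = max C 0"
  have "\<bar>Taylor k f x\<bar> \<le> D / m * \<Lambda>"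
    if f: "kmono k f" "Lp_norm p (\<lambda>x. jw a b x * f x) = ennreal \<Lambda>" "\<Lambda> \<ge> 0" and x: "x \<in> {-1..1}"
    for f \<Lambda> x
  proof (rule field_le_epsilon)
    fix e :: real assume "e > 0"
    define \<epsilon> where "\<epsilon> = e * m / (D + 1)"
    have D: "D \<ge> 0" by (simp add: D_def)
    have \<epsilon>: "\<epsilon> > 0" using \<open>e > 0\<close> m(1) D by (simp add: \<epsilon>_def)
    have "D * \<epsilon> / m = e * (D / (D + 1))"
      using m(1) D by (simp add: \<epsilon>_def)
    also have "\<dots> \<le> e * 1" by (rule mult_left_mono) (use \<open>e > 0\<close> D in auto)
    finally have \<epsilon>_le: "D * \<epsilon> / m \<le> e" by simp
    have "small_on_intervals f ((\<Lambda> + \<epsilon>) / m)"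
      using small_on_intervals_if_Lp_norm[OF assms(2) f(2,3) m \<epsilon>] .
    then have "\<bar>Taylor k f x\<bar> \<le> C * ((\<Lambda> + \<epsilon>) / m)"
      using C kmono_imp_dd_nonneg[OF f(1)] x by blast
    also have "\<dots> \<le> D * ((\<Lambda> + \<epsilon>) / m)"
      using f(3) \<epsilon> m(1) by (intro mult_right_mono) (auto simp: D_def)
    also have "\<dots> = D / m * \<Lambda> + D * \<epsilon> / m"
      by (simp add: distrib_left add_divide_distrib)
    finally show "\<bar>Taylor k f x\<bar> \<le> D / m * \<Lambda> + e" using \<epsilon>_le by linarith
  qed
  moreover have "D / m \<ge> 0" using m(1) by (simp add: D_def)
  ultimately show ?thesis using that by blast
qed

lemma Lp_norm_weighted_le:
  assumes "1 \<le> p" "a \<in> Jp p" "b \<in> Jp p" "M \<ge> 0" "\<forall>x\<in>{-1..1}. \<bar>g x\<bar> \<le> M"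
    and [measurable]: "g \<in> borel_measurable borel"
  shows "Lp_norm p (\<lambda>x. jw a b x * g x) \<le> ennreal M * Lp_norm p (jw a b)"
proof -
  have "\<bar>jw a b x * g x\<bar> \<le> M * \<bar>jw a b x\<bar>" if "x \<in> {-1..1}" for x
    using mult_right_mono[OF bspec[OF assms(5) that] abs_ge_zero[of "jw a b x"]]
    by (simp only: abs_mult mult.commute)
  then show ?thesis
    by (intro Lp_norm_le_scaled[OF assms(1,4)] ballI Lp_norm_jw_finite[OF assms(1-3)]) measurable
qed

theorem lemma2p1:
  fixes k :: nat and p :: ennreal and a b :: real
  assumes "k \<ge> 1" and "1 \<le> p" and "a \<in> Jp p" and "b \<in> Jp p"
  shows "\<exists>c::real. \<forall>f :: real \<Rightarrow> real.
           kmono k f \<and> Lp_norm p (\<lambda>x. jw a b x * f x) < \<infinity> \<longrightarrow>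
           Lp_norm p (\<lambda>x. jw a b x * Taylor k f x) \<le> ennreal c * Lp_norm p (\<lambda>x. jw a b x * f x)"
proof -
  obtain C where C: "C \<ge> 0"
    "\<And>f \<Lambda> x. kmono k f \<Longrightarrow> Lp_norm p (\<lambda>x. jw a b x * f x) = ennreal \<Lambda> \<Longrightarrow> \<Lambda> \<ge> 0
       \<Longrightarrow> x \<in> {-1..1} \<Longrightarrow> \<bar>Taylor k f x\<bar> \<le> C * \<Lambda>"
    using Taylor_bounded_by_weighted_norm[OF assms(1,2)] by blast
  define W where "W = enn2real (Lp_norm p (jw a b))"
  have W: "Lp_norm p (jw a b) = ennreal W" "W \<ge> 0"
    using Lp_norm_jw_finite[OF assms(2-4)] by (simp_all add: W_def ennreal_enn2real)
  show ?thesis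
  proof (intro exI allI impI, elim conjE)
    fix f assume f: "kmono k f" "Lp_norm p (\<lambda>x. jw a b x * f x) < \<infinity>"
    define \<Lambda> where "\<Lambda> = enn2real (Lp_norm p (\<lambda>x. jw a b x * f x))"
    have \<Lambda>: "Lp_norm p (\<lambda>x. jw a b x * f x) = ennreal \<Lambda>" "\<Lambda> \<ge> 0"
      using f(2) by (simp_all add: \<Lambda>_def ennreal_enn2real)
    have "\<forall>x\<in>{-1..1}. \<bar>Taylor k f x\<bar> \<le> C * \<Lambda>" using C(2)[OF f(1) \<Lambda>] by blast
    then have "Lp_norm p (\<lambda>x. jw a b x * Taylor k f x) \<le> ennreal (C * \<Lambda>) * ennreal W"
      using Lp_norm_weighted_le[OF assms(2-4) _ _ Taylor_measurable] C(1) \<Lambda>(2) W(1) by simp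
    also have "\<dots> = ennreal (C * W) * ennreal \<Lambda>"
      using C(1) \<Lambda>(2) W(2) by (simp add: ennreal_mult[symmetric] mult_ac)
    finally show "Lp_norm p (\<lambda>x. jw a b x * Taylor k f x) \<le> ennreal (C * W) * Lp_norm p (\<lambda>x. jw a b x * f x)"
      unfolding \<Lambda>(1) .
  qed
qed

end
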